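(* Let $M$ be the allocation output by the online greedy algorithm on an instance of Model 1 and let $N$ be an optimal offline allocation. For each day $d_i\in D$, let $X_i$ be the set of Type 2 agents that $N$ allocates on day $d_i$, and let $Y_i$ be the set of agents that $M$ allocates on day $d_i$. Then $|X_i|\le |Y_i|$.
   Context: Model 1: finite sets of agents $A$, categories $C$ and days $D=\{d_1,\dots,d_T\}$; each agent is eligible for a subset of categories; daily supply $s_i$ for day $d_i$; daily quota $q_{ik}$ for category $c_k$ on day $d_i$; each agent $a_j$ has a priority factor $\alpha_j>0$ and a set of available days; discount factor $\delta\in(0,1)$. An allocation maps each agent to a pair (eligible category, available day) or to $\emptyset$, with at most $q_{ik}$ agents getting $(c_k,d_i)$ and at most $s_i$ agents getting day $d_i$; agent $a_j$ allocated on day $d_i$ has utility $\alpha_j\delta^{i-1}$, and an optimal offline allocation maximizes total utility. The online greedy algorithm: on each day $d_i$, let $A_i$ be the agents available on $d_i$ not yet allocated; form the bipartite graph between $A_i$ and $C$ with an edge $(a_j,c_k)$ when $a_j$ is eligible for $c_k$, of weight $\alpha_j\delta^{i-1}$, agents of capacity $1$ and $c_k$ of capacity $q_{ik}$; compute a maximum-weight $b$-matching of size at most $s_i$ and allocate accordingly on day $d_i$. An agent allocated by $N$ is of Type 1 if $M$ allocates it on a strictly earlier day than $N$ does; every other agent allocated by $N$ is of Type 2. *)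

theory Defs
  imports Complex_Main
begin

text \<open>Model 1. Agents have type 'a, categories type 'c; days are d_1..d_T, represented by
  the natural numbers 1..T. An allocation maps each agent to Some (category, day) or None.\<close>

definition model1_instance ::
  "'a set \<Rightarrow> 'c set \<Rightarrow> nat \<Rightarrow> ('a \<Rightarrow> 'c set) \<Rightarrow> ('a \<Rightarrow> real) \<Rightarrow> ('a \<Rightarrow> nat set) \<Rightarrow> real \<Rightarrow> bool"
where
  "model1_instance A C T elig \<alpha> avail \<delta> \<longleftrightarrow>
     finite A \<and> finite C \<and>
     (\<forall>a\<in>A. elig a \<subseteq> C) \<and>
     (\<forall>a\<in>A. \<alpha> a > 0) \<and>
     (\<forall>a\<in>A. avail a \<subseteq> {1..T}) \<and>
     0 < \<delta> \<and> \<delta> < 1"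

definition valid_alloc ::
  "'a set \<Rightarrow> 'c set \<Rightarrow> nat \<Rightarrow> ('a \<Rightarrow> 'c set) \<Rightarrow> (nat \<Rightarrow> nat) \<Rightarrow> (nat \<Rightarrow> 'c \<Rightarrow> nat)
    \<Rightarrow> ('a \<Rightarrow> nat set) \<Rightarrow> ('a \<Rightarrow> ('c \<times> nat) option) \<Rightarrow> bool"
where
  "valid_alloc A C T elig s q avail X \<longleftrightarrow>
     (\<forall>a. a \<notin> A \<longrightarrow> X a = None) \<and>
     (\<forall>a\<in>A. \<forall>c i. X a = Some (c, i) \<longrightarrow> c \<in> elig a \<and> i \<in> avail a) \<and>
     (\<forall>i c. card {a\<in>A. X a = Some (c, i)} \<le> q i c) \<and>
     (\<forall>i. card {a\<in>A. \<exists>c. X a = Some (c, i)} \<le> s i)"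

definition utility ::
  "'a set \<Rightarrow> ('a \<Rightarrow> real) \<Rightarrow> real \<Rightarrow> ('a \<Rightarrow> ('c \<times> nat) option) \<Rightarrow> real"
where
  "utility A \<alpha> \<delta> X =
     (\<Sum>a\<in>A. case X a of None \<Rightarrow> 0 | Some (c, i) \<Rightarrow> \<alpha> a * \<delta> ^ (i - 1))"

definition optimal_alloc ::
  "'a set \<Rightarrow> 'c set \<Rightarrow> nat \<Rightarrow> ('a \<Rightarrow> 'c set) \<Rightarrow> (nat \<Rightarrow> nat) \<Rightarrow> (nat \<Rightarrow> 'c \<Rightarrow> nat)
    \<Rightarrow> ('a \<Rightarrow> real) \<Rightarrow> ('a \<Rightarrow> nat set) \<Rightarrow> real \<Rightarrow> ('a \<Rightarrow> ('c \<times> nat) option) \<Rightarrow> bool"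
where
  "optimal_alloc A C T elig s q \<alpha> avail \<delta> N \<longleftrightarrow>
     valid_alloc A C T elig s q avail N \<and>
     (\<forall>X. valid_alloc A C T elig s q avail X \<longrightarrow> utility A \<alpha> \<delta> X \<le> utility A \<alpha> \<delta> N)"

definition remaining_agents ::
  "'a set \<Rightarrow> ('a \<Rightarrow> nat set) \<Rightarrow> ('a \<Rightarrow> ('c \<times> nat) option) \<Rightarrow> nat \<Rightarrow> 'a set"
where
  "remaining_agents A avail M i =
     {a\<in>A. i \<in> avail a \<and> \<not> (\<exists>c j. j < i \<and> M a = Some (c, j))}"

text \<open>b-matchings of size at most s i in the day-i bipartite graph between the agent set R
  (capacity 1) and the categories (capacity q i c), edges (a,c) with a eligible for c.\<close>
definition day_bmatching ::
  "'c set \<Rightarrow> ('a \<Rightarrow> 'c set) \<Rightarrow> (nat \<Rightarrow> nat) \<Rightarrow> (nat \<Rightarrow> 'c \<Rightarrow> nat) \<Rightarrow> 'a set \<Rightarrow> nat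
    \<Rightarrow> ('a \<times> 'c) set \<Rightarrow> bool"
where
  "day_bmatching C elig s q R i E \<longleftrightarrow>
     (\<forall>(a, c)\<in>E. a \<in> R \<and> c \<in> C \<and> c \<in> elig a) \<and>
     (\<forall>a c c'. (a, c) \<in> E \<longrightarrow> (a, c') \<in> E \<longrightarrow> c = c') \<and>
     (\<forall>c. card {a. (a, c) \<in> E} \<le> q i c) \<and>
     card E \<le> s i"

definition bmatching_weight :: "('a \<Rightarrow> real) \<Rightarrow> real \<Rightarrow> nat \<Rightarrow> ('a \<times> 'c) set \<Rightarrow> real"
where
  "bmatching_weight \<alpha> \<delta> i E = (\<Sum>(a, c)\<in>E. \<alpha> a * \<delta> ^ (i - 1))"

text \<open>M is a possible output of the online greedy algorithm: on each day i the pairs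
  allocated on day i form a maximum-weight b-matching (of size at most s i) among the
  agents available on day i and not yet allocated.\<close>
definition greedy_alloc ::
  "'a set \<Rightarrow> 'c set \<Rightarrow> nat \<Rightarrow> ('a \<Rightarrow> 'c set) \<Rightarrow> (nat \<Rightarrow> nat) \<Rightarrow> (nat \<Rightarrow> 'c \<Rightarrow> nat)
    \<Rightarrow> ('a \<Rightarrow> real) \<Rightarrow> ('a \<Rightarrow> nat set) \<Rightarrow> real \<Rightarrow> ('a \<Rightarrow> ('c \<times> nat) option) \<Rightarrow> bool"
where
  "greedy_alloc A C T elig s q \<alpha> avail \<delta> M \<longleftrightarrow>
     (\<forall>a. a \<notin> A \<longrightarrow> M a = None) \<and>
     (\<forall>a c i. M a = Some (c, i) \<longrightarrow> i \<in> {1..T}) \<and>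
     (\<forall>i\<in>{1..T}.
        let R = remaining_agents A avail M i;
            E = {(a, c). M a = Some (c, i)}
        in day_bmatching C elig s q R i E \<and>
           (\<forall>E'. day_bmatching C elig s q R i E' \<longrightarrow>
                 bmatching_weight \<alpha> \<delta> i E' \<le> bmatching_weight \<alpha> \<delta> i E))"

definition type2_on_day ::
  "'a set \<Rightarrow> ('a \<Rightarrow> ('c \<times> nat) option) \<Rightarrow> ('a \<Rightarrow> ('c \<times> nat) option) \<Rightarrow> nat \<Rightarrow> 'a set"
where
  "type2_on_day A M N i =
     {a\<in>A. (\<exists>c. N a = Some (c, i)) \<and> \<not> (\<exists>c j. M a = Some (c, j) \<and> j < i)}"

definition allocated_on_day :: "'a set \<Rightarrow> ('a \<Rightarrow> ('c \<times> nat) option) \<Rightarrow> nat \<Rightarrow> 'a set"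
where
  "allocated_on_day A M i = {a\<in>A. \<exists>c. M a = Some (c, i)}"

end

theory Submission
  imports Defs
begin

text \<open>If more than |Y_i| Type 2 agents were allocated by N on day i, these agents
  together with their N-categories would form a feasible b-matching of the greedy day-i graph
  that is larger than the greedy one. Agent sets that admit a quota-respecting assignment to
  admissible categories satisfy the matroid augmentation property, so the greedy matching could
  be extended by one further agent of positive weight, contradicting its maximality.\<close>

definition respects_quota :: "'a set \<Rightarrow> ('a \<Rightarrow> 'c) \<Rightarrow> ('c \<Rightarrow> nat) \<Rightarrow> bool" where
  "respects_quota S h Q \<longleftrightarrow> (\<forall>c. card {a\<in>S. h a = c} \<le> Q c)"

definition assignment_graph :: "'a set \<Rightarrow> ('a \<Rightarrow> 'c) \<Rightarrow> ('a \<times> 'c) set" where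
  "assignment_graph S h = (\<lambda>a. (a, h a)) ` S"

lemma ex_fibre_card_less:
  assumes "finite S" "finite S'" "card S < card S'"
  shows "\<exists>c. card {a\<in>S. f a = c} < card {a\<in>S'. g a = c}"
proof (rule ccontr)
  assume "\<not> ?thesis"
  hence le: "card {a\<in>S'. g a = c} \<le> card {a\<in>S. f a = c}" for c
    by (simp add: not_less)
  define K where "K = f ` S \<union> g ` S'"
  have "finite K" using assms by (simp add: K_def)
  have "card S' = (\<Sum>c\<in>K. card {a\<in>S'. g a = c})"
    using sum.group[OF assms(2) \<open>finite K\<close>, of g "\<lambda>_. 1::nat"] by (simp add: K_def)
  also have "\<dots> \<le> (\<Sum>c\<in>K. card {a\<in>S. f a = c})" by (rule sum_mono) (rule le)
  also have "\<dots> = card S"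
    using sum.group[OF assms(1) \<open>finite K\<close>, of f "\<lambda>_. 1::nat"] by (simp add: K_def)
  finally show False using assms(3) by simp
qed

lemma respects_quota_update:
  assumes "finite S" "respects_quota S f Q" "card {a\<in>S. f a = c} < Q c"
  shows "respects_quota (insert x S) (f(x := c)) Q"
  unfolding respects_quota_def
proof
  fix d
  show "card {a\<in>insert x S. (f(x := c)) a = d} \<le> Q d"
  proof (cases "d = c")
    case True
    have "{a\<in>insert x S. (f(x := c)) a = d} \<subseteq> insert x {a\<in>S. f a = c}"
      using True by auto
    hence "card {a\<in>insert x S. (f(x := c)) a = d} \<le> card (insert x {a\<in>S. f a = c})"
      using assms(1) by (intro card_mono) auto
    also have "\<dots> \<le> Suc (card {a\<in>S. f a = c})"
      using assms(1) by (simp add: card_insert_if)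
    finally show ?thesis using True assms(3) by simp
  next
    case False
    have "{a\<in>insert x S. (f(x := c)) a = d} \<subseteq> {a\<in>S. f a = d}"
      using False by auto
    hence "card {a\<in>insert x S. (f(x := c)) a = d} \<le> card {a\<in>S. f a = d}"
      using assms(1) by (intro card_mono) auto
    thus ?thesis using assms(2) by (simp add: respects_quota_def le_trans)
  qed
qed

text \<open>When no agent of S' - S fits into its g-category on top of f, some category c is
  over-represented in g and completely filled by agents of S \<inter> S'; one of them is not
  in class c under f and can be moved there.\<close>

lemma ex_reassignable_agent:
  assumes "finite S" "finite S'" "card S < card S'" "respects_quota S' g Q"
    and full: "\<forall>x\<in>S' - S. Q (g x) \<le> card {a\<in>S. f a = g x}"
  shows "\<exists>a\<in>S \<inter> S'. f a \<noteq> g a \<and> card {b\<in>S. f b = g a} < Q (g a)"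
proof -
  obtain c where c: "card {a\<in>S. f a = c} < card {a\<in>S'. g a = c}"
    using ex_fibre_card_less[OF assms(1-3), of f g] by blast
  have quota_c: "card {a\<in>S'. g a = c} \<le> Q c"
    using assms(4) by (simp add: respects_quota_def)
  have "{a\<in>S'. g a = c} \<subseteq> S"
  proof
    fix y assume y: "y \<in> {a\<in>S'. g a = c}"
    show "y \<in> S"
    proof (rule ccontr)
      assume "y \<notin> S"
      hence "Q c \<le> card {a\<in>S. f a = c}" using full y by auto
      thus False using c quota_c by simp
    qed
  qed
  moreover have "\<not> {a\<in>S'. g a = c} \<subseteq> {a\<in>S. f a = c}"
  proof
    assume "{a\<in>S'. g a = c} \<subseteq> {a\<in>S. f a = c}"
    hence "card {a\<in>S'. g a = c} \<le> card {a\<in>S. f a = c}"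
      using assms(1) by (intro card_mono) auto
    thus False using c by simp
  qed
  ultimately obtain a where "a \<in> S \<inter> S'" "g a = c" "f a \<noteq> c" by blast
  thus ?thesis using c quota_c by auto
qed

lemma quota_assignment_augment:
  assumes "finite S" "finite S'" "card S < card S'"
    and "\<forall>a\<in>S. f a \<in> P a" "respects_quota S f Q"
    and "\<forall>a\<in>S'. g a \<in> P a" "respects_quota S' g Q"
  shows "\<exists>x\<in>S' - S. \<exists>h. (\<forall>a\<in>insert x S. h a \<in> P a) \<and> respects_quota (insert x S) h Q"
  using assms(4,5)
proof (induction "card {a\<in>S \<inter> S'. f a \<noteq> g a}" arbitrary: f rule: less_induct)
  case less
  show ?case
  proof (cases "\<exists>x\<in>S' - S. card {a\<in>S. f a = g x} < Q (g x)")
    case True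
    then obtain x where x: "x \<in> S' - S" "card {a\<in>S. f a = g x} < Q (g x)" by blast
    have "\<forall>a\<in>insert x S. (f(x := g x)) a \<in> P a" using x(1) less.prems(1) assms(6) by auto
    moreover have "respects_quota (insert x S) (f(x := g x)) Q"
      using respects_quota_update[OF assms(1) less.prems(2) x(2)] .
    ultimately show ?thesis using x(1) by blast
  next
    case False
    hence "\<forall>x\<in>S' - S. Q (g x) \<le> card {a\<in>S. f a = g x}" by (simp add: not_less)
    then obtain a where a: "a \<in> S \<inter> S'" "f a \<noteq> g a" "card {b\<in>S. f b = g a} < Q (g a)"
      using ex_reassignable_agent[OF assms(1-3,7)] by blast
    define f' where "f' = f(a := g a)"
    have "{b\<in>S \<inter> S'. f' b \<noteq> g b} = {b\<in>S \<inter> S'. f b \<noteq> g b} - {a}"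
      by (auto simp: f'_def)
    also have "card \<dots> < card {b\<in>S \<inter> S'. f b \<noteq> g b}"
      using a(1,2) assms(1) by (intro card_Diff1_less) auto
    finally have fewer: "card {b\<in>S \<inter> S'. f' b \<noteq> g b} < card {b\<in>S \<inter> S'. f b \<noteq> g b}" .
    have "\<forall>b\<in>S. f' b \<in> P b" using less.prems(1) assms(6) a(1) by (simp add: f'_def)
    moreover have "respects_quota S f' Q"
      using respects_quota_update[OF assms(1) less.prems(2) a(3), of a] a(1)
      by (simp add: f'_def insert_absorb)
    ultimately show ?thesis by (rule less.hyps[OF fewer])
  qed
qed

lemma day_bmatching_assignment_graph_iff:
  "day_bmatching C elig s q R i (assignment_graph S h) \<longleftrightarrow>
     S \<subseteq> R \<and> (\<forall>a\<in>S. h a \<in> C \<inter> elig a) \<and> respects_quota S h (q i) \<and> card S \<le> s i"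
proof -
  have "{a. (a, c) \<in> assignment_graph S h} = {a\<in>S. h a = c}" for c
    by (auto simp: assignment_graph_def)
  moreover have "card (assignment_graph S h) = card S"
    unfolding assignment_graph_def by (rule card_image) (auto intro: inj_onI)
  ultimately show ?thesis
    by (auto simp: day_bmatching_def respects_quota_def assignment_graph_def)
qed

lemma bmatching_weight_assignment_graph:
  "bmatching_weight \<alpha> \<delta> i (assignment_graph S h) = (\<Sum>a\<in>S. \<alpha> a * \<delta> ^ (i - 1))"
  unfolding bmatching_weight_def assignment_graph_def
  by (subst sum.reindex) (auto intro: inj_onI)

lemma day_bmatching_augment:
  assumes "finite S" "card S < card S'"
    and "day_bmatching C elig s q R i (assignment_graph S f)"
    and "day_bmatching C elig s q R i (assignment_graph S' g)"
  shows "\<exists>x\<in>S' - S. \<exists>h. day_bmatching C elig s q R i (assignment_graph (insert x S) h)"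
proof -
  have "finite S'" using assms(2) card.infinite by force
  have f: "S \<subseteq> R" "\<forall>a\<in>S. f a \<in> C \<inter> elig a" "respects_quota S f (q i)"
    using assms(3) by (simp_all add: day_bmatching_assignment_graph_iff)
  have g: "S' \<subseteq> R" "\<forall>a\<in>S'. g a \<in> C \<inter> elig a" "respects_quota S' g (q i)" "card S' \<le> s i"
    using assms(4) by (simp_all add: day_bmatching_assignment_graph_iff)
  obtain x h where x: "x \<in> S' - S"
    and h: "\<forall>a\<in>insert x S. h a \<in> C \<inter> elig a" "respects_quota (insert x S) h (q i)"
    using quota_assignment_augment[OF assms(1) \<open>finite S'\<close> assms(2) f(2,3) g(2,3)] by blast
  have "card (insert x S) \<le> s i"
    using x assms(1,2) g(4) by simp
  hence "day_bmatching C elig s q R i (assignment_graph (insert x S) h)"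
    using x f(1) g(1) h by (auto simp: day_bmatching_assignment_graph_iff)
  thus ?thesis using x by blast
qed

lemma greedy_day_matching:
  assumes "greedy_alloc A C T elig s q \<alpha> avail \<delta> M" "i \<in> {1..T}"
  defines "E \<equiv> assignment_graph (allocated_on_day A M i) (\<lambda>a. fst (the (M a)))"
  shows "day_bmatching C elig s q (remaining_agents A avail M i) i E"
    and "day_bmatching C elig s q (remaining_agents A avail M i) i E'
           \<Longrightarrow> bmatching_weight \<alpha> \<delta> i E' \<le> bmatching_weight \<alpha> \<delta> i E"
proof -
  have "M a = None" if "a \<notin> A" for a
    using assms(1) that by (simp add: greedy_alloc_def)
  hence "E = {(a, c). M a = Some (c, i)}"
    unfolding E_def assignment_graph_def allocated_on_day_def by force
  moreover have "day_bmatching C elig s q (remaining_agents A avail M i) i {(a, c). M a = Some (c, i)}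
    \<and> (\<forall>E'. day_bmatching C elig s q (remaining_agents A avail M i) i E' \<longrightarrow>
          bmatching_weight \<alpha> \<delta> i E' \<le> bmatching_weight \<alpha> \<delta> i {(a, c). M a = Some (c, i)})"
    using assms(1,2) unfolding greedy_alloc_def Let_def by blast
  ultimately show "day_bmatching C elig s q (remaining_agents A avail M i) i E"
    and "day_bmatching C elig s q (remaining_agents A avail M i) i E'
           \<Longrightarrow> bmatching_weight \<alpha> \<delta> i E' \<le> bmatching_weight \<alpha> \<delta> i E"
    by simp_all
qed

lemma type2_day_bmatching:
  assumes "finite A" "\<forall>a\<in>A. elig a \<subseteq> C" "valid_alloc A C T elig s q avail N"
  shows "day_bmatching C elig s q (remaining_agents A avail M i) i
           (assignment_graph (type2_on_day A M N i) (\<lambda>a. fst (the (N a))))"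
  unfolding day_bmatching_assignment_graph_iff respects_quota_def
proof (intro conjI allI ballI subsetI)
  let ?X = "type2_on_day A M N i" and ?g = "\<lambda>a. fst (the (N a))"
  have type2: "a \<in> A" "N a = Some (?g a, i)" "\<not> (\<exists>c j. M a = Some (c, j) \<and> j < i)"
    if "a \<in> ?X" for a
    using that by (auto simp: type2_on_day_def)
  have admissible: "?g a \<in> elig a" "i \<in> avail a" if "a \<in> ?X" for a
    using type2[OF that] assms(3) unfolding valid_alloc_def by blast+
  show "a \<in> remaining_agents A avail M i" if "a \<in> ?X" for a
    using type2[OF that] admissible[OF that] by (auto simp: remaining_agents_def)
  show "?g a \<in> C \<inter> elig a" if "a \<in> ?X" for a
    using type2(1)[OF that] admissible(1)[OF that] assms(2) by blast
  show "card {a\<in>?X. ?g a = c} \<le> q i c" for c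
  proof -
    have "card {a\<in>?X. ?g a = c} \<le> card {a\<in>A. N a = Some (c, i)}"
      using type2 assms(1) by (intro card_mono) auto
    thus ?thesis using assms(3) unfolding valid_alloc_def by (meson le_trans)
  qed
  have "card ?X \<le> card {a\<in>A. \<exists>c. N a = Some (c, i)}"
    using assms(1) by (intro card_mono) (auto simp: type2_on_day_def)
  thus "card ?X \<le> s i" using assms(3) unfolding valid_alloc_def by (meson le_trans)
qed

theorem lemma2:
  fixes A :: "'a set" and C :: "'c set" and T :: nat
    and elig :: "'a \<Rightarrow> 'c set" and s :: "nat \<Rightarrow> nat" and q :: "nat \<Rightarrow> 'c \<Rightarrow> nat"
    and \<alpha> :: "'a \<Rightarrow> real" and avail :: "'a \<Rightarrow> nat set" and \<delta> :: real
    and M N :: "'a \<Rightarrow> ('c \<times> nat) option" and i :: nat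
  assumes "model1_instance A C T elig \<alpha> avail \<delta>"
    and "greedy_alloc A C T elig s q \<alpha> avail \<delta> M"
    and "optimal_alloc A C T elig s q \<alpha> avail \<delta> N"
    and "i \<in> {1..T}"
  shows "card (type2_on_day A M N i) \<le> card (allocated_on_day A M i)"
proof (rule ccontr)
  let ?Y = "allocated_on_day A M i" and ?R = "remaining_agents A avail M i"
  assume "\<not> ?thesis"
  hence more: "card ?Y < card (type2_on_day A M N i)" by simp
  have inst: "finite A" "\<forall>a\<in>A. elig a \<subseteq> C" "\<forall>a\<in>A. \<alpha> a > 0" "0 < \<delta>"
    using assms(1) by (auto simp: model1_instance_def)
  have "finite ?Y" using inst(1) by (simp add: allocated_on_day_def)
  have "valid_alloc A C T elig s q avail N" using assms(3) by (simp add: optimal_alloc_def)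
  then obtain x h where x: "x \<in> type2_on_day A M N i - ?Y"
    and h: "day_bmatching C elig s q ?R i (assignment_graph (insert x ?Y) h)"
    using day_bmatching_augment[OF \<open>finite ?Y\<close> more greedy_day_matching(1)[OF assms(2,4)]
        type2_day_bmatching[OF inst(1,2)]] by blast
  have "0 < \<alpha> x * \<delta> ^ (i - 1)"
    using x inst by (auto simp: type2_on_day_def)
  hence "bmatching_weight \<alpha> \<delta> i (assignment_graph ?Y (\<lambda>a. fst (the (M a))))
          < bmatching_weight \<alpha> \<delta> i (assignment_graph (insert x ?Y) h)"
    using x \<open>finite ?Y\<close> by (simp add: bmatching_weight_assignment_graph)
  thus False using greedy_day_matching(2)[OF assms(2,4) h] by simp
qed

end
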